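(* Let $\mathcal X\subset\mathbb{R}$ be a nonempty compact convex set of control angles and $\epsilon_r>0$. Let $\theta\in\mathbb{R}^n$ contain, as linear coordinates, two matrices $R^a,R^b\in\mathbb{R}^{3\times3}$, and let $R_x(u)=\begin{pmatrix}1&0&0\\0&\cos u&-\sin u\\0&\sin u&\cos u\end{pmatrix}$. Define $$b(\theta,u)=-\frac{\mathrm{tr}\big((R^a)^TR^bR_x(u)^T\big)}{\sqrt{\|R^a\|_F^2+\epsilon_r}\sqrt{\|R^b\|_F^2+\epsilon_r}}.$$ Then for every $u\in\mathcal X$, $b(\cdot,u)$ is twice differentiable in $\theta$ with locally Lipschitz second derivatives and is $L$-curvature bounded for a constant $L$ independent of $u$, and $\|\partial^2b/\partial\theta\partial u\|$ is uniformly bounded over $\theta\in\mathbb{R}^n$, $u\in\mathcal X$.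
   Context: $\|\cdot\|_F$ is the Frobenius norm. A function $\phi$ is $L$-curvature bounded if $\phi(x)+\frac L2\|x\|^2$ is convex and $\nabla\phi$ is $L$-Lipschitz. *)

theory Defs
  imports "HOL-Analysis.Analysis"
begin

definition Rx :: "real \<Rightarrow> real^3^3" where
  "Rx u = vector [vector [1, 0, 0],
                  vector [0, cos u, - sin u],
                  vector [0, sin u, cos u]]"

definition frob_norm :: "real^3^3 \<Rightarrow> real" where
  "frob_norm A = sqrt (\<Sum>i\<in>UNIV. \<Sum>j\<in>UNIV. (A $ i $ j)^2)"

text \<open>The barrier-type function b(theta,u); Ra = Pa theta, Rb = Pb theta.\<close>
definition bfun :: "(real^'n \<Rightarrow> real^3^3) \<Rightarrow> (real^'n \<Rightarrow> real^3^3) \<Rightarrow> real \<Rightarrow>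
                    real^'n \<Rightarrow> real \<Rightarrow> real" where
  "bfun Pa Pb eps \<theta> u =
     - trace (transpose (Pa \<theta>) ** Pb \<theta> ** transpose (Rx u))
     / (sqrt ((frob_norm (Pa \<theta>))^2 + eps) * sqrt ((frob_norm (Pb \<theta>))^2 + eps))"

definition curvature_bounded :: "real \<Rightarrow> ('a::euclidean_space \<Rightarrow> real) \<Rightarrow> bool" where
  "curvature_bounded L \<phi> \<longleftrightarrow>
     convex_on UNIV (\<lambda>x. \<phi> x + L / 2 * (norm x)^2) \<and>
     (\<exists>g. (\<forall>x. GDERIV \<phi> x :> g x) \<and> L-lipschitz_on UNIV g)"

definition twice_diff_loc_lip_hessian :: "('a::euclidean_space \<Rightarrow> real) \<Rightarrow> bool" where
  "twice_diff_loc_lip_hessian \<phi> \<longleftrightarrow>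
     (\<exists>g H. (\<forall>x. GDERIV \<phi> x :> g x) \<and>
            (\<forall>x. (g has_derivative blinfun_apply (H x)) (at x)) \<and>
            (\<forall>x. \<exists>e>0. \<exists>K. K-lipschitz_on (ball x e) H))"

end

theory Submission
  imports Defs
begin

(* Write g(x) = x / sqrt(|x|^2 + eps) and split transpose (Rx u) = C0 + cos u C1 + sin u C2.
   Then b(theta, u) = -(F0 theta + cos u F1 theta + sin u F2 theta) with
   Fi theta = <g(R^a), g(R^b) Ci>_F.  Because eps > 0, g is bounded and Lipschitz with a bounded,
   Lipschitz derivative, and this class of maps is closed under sums, bounded bilinear products
   and linear maps; hence the gradients of the Fi belong to it.  An L-Lipschitz gradient makes
   phi + L/2 |x|^2 convex, and since |cos u|, |sin u| <= 1 all constants are uniform in u over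
   the whole real line. *)

section \<open>Bounded maps with bounded Lipschitz derivative\<close>

definition bounded_lipschitz :: "('a::metric_space \<Rightarrow> 'b::real_normed_vector) \<Rightarrow> bool" where
  "bounded_lipschitz f \<longleftrightarrow> (\<exists>B. \<forall>x. norm (f x) \<le> B) \<and> (\<exists>L. L-lipschitz_on UNIV f)"

lemma bounded_lipschitzE:
  assumes "bounded_lipschitz f"
  obtains B L where "\<And>x. norm (f x) \<le> B" "L-lipschitz_on UNIV f"
  using assms unfolding bounded_lipschitz_def by blast

lemma bounded_lipschitz_const: "bounded_lipschitz (\<lambda>x. c)"
  unfolding bounded_lipschitz_def by (auto intro: lipschitz_on_constant)

lemma bounded_lipschitz_add:
  assumes "bounded_lipschitz f" "bounded_lipschitz g"
  shows "bounded_lipschitz (\<lambda>x. f x + g x)"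
proof -
  obtain Bf Lf Bg Lg where "\<And>x. norm (f x) \<le> Bf" "Lf-lipschitz_on UNIV f"
    and "\<And>x. norm (g x) \<le> Bg" "Lg-lipschitz_on UNIV g"
    using assms by (metis bounded_lipschitzE)
  then have "norm (f x + g x) \<le> Bf + Bg" "(Lf + Lg)-lipschitz_on UNIV (\<lambda>x. f x + g x)" for x
    by (auto intro: norm_triangle_le add_mono lipschitz_on_add)
  then show ?thesis unfolding bounded_lipschitz_def by blast
qed

lemma bounded_lipschitz_minus: "bounded_lipschitz f \<Longrightarrow> bounded_lipschitz (\<lambda>x. - f x)"
  unfolding bounded_lipschitz_def by auto

lemma bounded_lipschitz_diff:
  fixes f g :: "'a::metric_space \<Rightarrow> 'b::real_normed_vector"
  shows "bounded_lipschitz f \<Longrightarrow> bounded_lipschitz g \<Longrightarrow> bounded_lipschitz (\<lambda>x. f x - g x)"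
  using bounded_lipschitz_add[of f "\<lambda>x. - g x"] bounded_lipschitz_minus[of g] by simp

lemma bounded_lipschitz_bilinear:
  assumes "bounded_bilinear pr" "bounded_lipschitz f" "bounded_lipschitz g"
  shows "bounded_lipschitz (\<lambda>x. pr (f x) (g x))"
proof -
  interpret bounded_bilinear pr by fact
  obtain K where K: "K \<ge> 0" "\<And>a b. norm (pr a b) \<le> norm a * norm b * K"
    using nonneg_bounded by blast
  obtain Bf Lf Bg Lg where Bf: "\<And>x. norm (f x) \<le> Bf" and Lf: "Lf-lipschitz_on UNIV f"
    and Bg: "\<And>x. norm (g x) \<le> Bg" and Lg: "Lg-lipschitz_on UNIV g"
    using assms(2,3) by (metis bounded_lipschitzE)
  have nonneg: "Bf \<ge> 0" "Bg \<ge> 0" "Lf \<ge> 0" "Lg \<ge> 0"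
    using Bf Bg norm_ge_zero order_trans lipschitz_on_nonneg[OF Lf] lipschitz_on_nonneg[OF Lg]
    by blast+
  have "norm (pr (f x) (g x)) \<le> Bf * Bg * K" for x
    using K order_trans[OF K(2)] Bf Bg nonneg by (meson mult_mono mult_right_mono norm_ge_zero)
  moreover have "(K * (Lf * Bg + Bf * Lg))-lipschitz_on UNIV (\<lambda>x. pr (f x) (g x))"
  proof (rule lipschitz_onI)
    fix x y
    have "dist (pr (f x) (g x)) (pr (f y) (g y))
        = norm (pr (f x - f y) (g x) + pr (f y) (g x - g y))"
      by (simp add: dist_norm diff_left diff_right)
    also have "\<dots> \<le> norm (f x - f y) * norm (g x) * K + norm (f y) * norm (g x - g y) * K"
      by (intro order_trans[OF norm_triangle_ineq] add_mono K(2))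
    also have "\<dots> \<le> (Lf * dist x y) * Bg * K + Bf * (Lg * dist x y) * K"
      using lipschitz_onD[OF Lf] lipschitz_onD[OF Lg] Bf Bg K(1) nonneg
      by (intro add_mono mult_right_mono mult_mono) (auto simp: dist_norm)
    finally show "dist (pr (f x) (g x)) (pr (f y) (g y)) \<le> K * (Lf * Bg + Bf * Lg) * dist x y"
      by (simp add: algebra_simps)
  qed (use K nonneg in simp)
  ultimately show ?thesis unfolding bounded_lipschitz_def by blast
qed

lemma bounded_lipschitz_linear:
  assumes "bounded_linear T" "bounded_lipschitz f"
  shows "bounded_lipschitz (\<lambda>x. T (f x))"
proof -
  interpret bounded_linear T by fact
  obtain K where K: "K \<ge> 0" "\<And>x. norm (T x) \<le> norm x * K" using nonneg_bounded by blast
  obtain C where C: "C-lipschitz_on (range f) T" using lipschitz_boundE by blast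
  obtain B L where "\<And>x. norm (f x) \<le> B" "L-lipschitz_on UNIV f"
    using assms(2) bounded_lipschitzE by blast
  then have "norm (T (f x)) \<le> B * K" "(C * L)-lipschitz_on UNIV (\<lambda>x. T (f x))" for x
    using K order_trans mult_right_mono lipschitz_on_compose2 C by metis+
  then show ?thesis unfolding bounded_lipschitz_def by blast
qed

lemma bounded_lipschitz_compose_linear:
  assumes "bounded_linear P" "bounded_lipschitz f"
  shows "bounded_lipschitz (\<lambda>x. f (P x))"
proof -
  obtain C where C: "C-lipschitz_on UNIV P"
    using bounded_linear.lipschitz_boundE[OF assms(1)] by blast
  obtain B L where "\<And>x. norm (f x) \<le> B" and L: "L-lipschitz_on UNIV f"
    using assms(2) bounded_lipschitzE by blast
  moreover have "(L * C)-lipschitz_on UNIV (\<lambda>x. f (P x))"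
    using lipschitz_on_compose2[OF C lipschitz_on_subset[OF L]] by simp
  ultimately show ?thesis unfolding bounded_lipschitz_def by blast
qed

definition bounded_C11 :: "('a::real_normed_vector \<Rightarrow> 'b::real_normed_vector) \<Rightarrow> bool" where
  "bounded_C11 f \<longleftrightarrow> bounded_lipschitz f \<and>
     (\<exists>f'. (\<forall>x. (f has_derivative blinfun_apply (f' x)) (at x)) \<and> bounded_lipschitz f')"

lemma bounded_C11E:
  assumes "bounded_C11 f"
  obtains f' where "bounded_lipschitz f" "\<And>x. (f has_derivative blinfun_apply (f' x)) (at x)"
    "bounded_lipschitz f'"
  using assms unfolding bounded_C11_def by blast

lemma bounded_C11_const: "bounded_C11 (\<lambda>x. c)"
  unfolding bounded_C11_def
  by (auto intro!: bounded_lipschitz_const exI[of _ "\<lambda>x. 0"] derivative_eq_intros)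

lemma bounded_C11_add:
  assumes "bounded_C11 f" "bounded_C11 g"
  shows "bounded_C11 (\<lambda>x. f x + g x)"
proof -
  obtain f' g' where f: "bounded_lipschitz f" "\<And>x. (f has_derivative blinfun_apply (f' x)) (at x)"
      "bounded_lipschitz f'"
    and g: "bounded_lipschitz g" "\<And>x. (g has_derivative blinfun_apply (g' x)) (at x)"
      "bounded_lipschitz g'"
    using assms by (metis bounded_C11E)
  show ?thesis unfolding bounded_C11_def
    by (auto intro!: bounded_lipschitz_add f g exI[of _ "\<lambda>x. f' x + g' x"] derivative_eq_intros
        simp: blinfun.add_left)
qed

lemma bounded_C11_minus:
  assumes "bounded_C11 f"
  shows "bounded_C11 (\<lambda>x. - f x)"
proof -
  obtain f' where f: "bounded_lipschitz f" "\<And>x. (f has_derivative blinfun_apply (f' x)) (at x)"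
      "bounded_lipschitz f'"
    using assms by (metis bounded_C11E)
  show ?thesis unfolding bounded_C11_def
    by (auto intro!: bounded_lipschitz_minus f exI[of _ "\<lambda>x. - f' x"] derivative_eq_intros
        simp: blinfun.minus_left)
qed

lemma bounded_C11_diff:
  fixes f g :: "'a::real_normed_vector \<Rightarrow> 'b::real_normed_vector"
  shows "bounded_C11 f \<Longrightarrow> bounded_C11 g \<Longrightarrow> bounded_C11 (\<lambda>x. f x - g x)"
  using bounded_C11_add[of f "\<lambda>x. - g x"] bounded_C11_minus[of g] by simp

lemma bounded_C11_bilinear:
  assumes pr: "bounded_bilinear pr" and "bounded_C11 f" "bounded_C11 g"
  shows "bounded_C11 (\<lambda>x. pr (f x) (g x))"
proof -
  interpret bounded_bilinear pr by fact
  obtain f' g' where f: "bounded_lipschitz f" "\<And>x. (f has_derivative blinfun_apply (f' x)) (at x)"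
      "bounded_lipschitz f'"
    and g: "bounded_lipschitz g" "\<And>x. (g has_derivative blinfun_apply (g' x)) (at x)"
      "bounded_lipschitz g'"
    using assms(2,3) by (metis bounded_C11E)
  define D where "D x = (prod_right (f x) o\<^sub>L g' x) + (prod_left (g x) o\<^sub>L f' x)" for x
  have "blinfun_apply (D x) = (\<lambda>h. pr (f x) (g' x h) + pr (f' x h) (g x))" for x
    by (rule ext) (simp add: D_def blinfun.add_left bounded_bilinear.prod_left.rep_eq[OF pr]
        bounded_bilinear.prod_right.rep_eq[OF pr])
  then have "((\<lambda>x. pr (f x) (g x)) has_derivative blinfun_apply (D x)) (at x)" for x
    using FDERIV[OF f(2) g(2)] by simp
  moreover have "bounded_lipschitz D"
    unfolding D_def
    by (intro bounded_lipschitz_add bounded_lipschitz_bilinear[OF bounded_bilinear_blinfun_compose]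
        bounded_lipschitz_linear[OF bounded_linear_prod_right]
        bounded_lipschitz_linear[OF bounded_linear_prod_left] f g)
  ultimately show ?thesis
    unfolding bounded_C11_def using bounded_lipschitz_bilinear[OF pr f(1) g(1)] by blast
qed

lemma bounded_C11_linear:
  assumes T: "bounded_linear T" and "bounded_C11 f"
  shows "bounded_C11 (\<lambda>x. T (f x))"
proof -
  obtain f' where f: "bounded_lipschitz f" "\<And>x. (f has_derivative blinfun_apply (f' x)) (at x)"
      "bounded_lipschitz f'"
    using assms(2) by (metis bounded_C11E)
  have "((\<lambda>x. T (f x)) has_derivative blinfun_apply (Blinfun T o\<^sub>L f' x)) (at x)" for x
    using bounded_linear.has_derivative[OF T f(2)]
    by (simp add: bounded_linear_Blinfun_apply[OF T] blinfun_compose.rep_eq o_def)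
  moreover have "bounded_lipschitz (\<lambda>x. Blinfun T o\<^sub>L f' x)"
    by (intro bounded_lipschitz_bilinear[OF bounded_bilinear_blinfun_compose]
        bounded_lipschitz_const f)
  ultimately show ?thesis
    unfolding bounded_C11_def using bounded_lipschitz_linear[OF T f(1)]
    by (intro conjI exI[of _ "\<lambda>x. Blinfun T o\<^sub>L f' x"]) auto
qed

lemma bounded_C11_gradient_imp_twice_diff_loc_lip_hessian:
  fixes f :: "'a::euclidean_space \<Rightarrow> real"
  assumes "\<And>x. GDERIV f x :> g x" "bounded_C11 g"
  shows "twice_diff_loc_lip_hessian f"
proof -
  obtain H where "\<And>x. (g has_derivative blinfun_apply (H x)) (at x)" "bounded_lipschitz H"
    using assms(2) by (metis bounded_C11E)
  moreover from this(2) obtain K where "K-lipschitz_on UNIV H"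
    by (metis bounded_lipschitzE)
  then have "K-lipschitz_on (ball x 1) H" for x
    by (rule lipschitz_on_subset) simp
  ultimately show ?thesis
    unfolding twice_diff_loc_lip_hessian_def using assms(1) zero_less_one by blast
qed

section \<open>The regularized normalization\<close>

definition reg_norm :: "real \<Rightarrow> 'a::real_inner \<Rightarrow> real" where
  "reg_norm e x = sqrt (x \<bullet> x + e)"

definition inv_reg_norm :: "real \<Rightarrow> 'a::real_inner \<Rightarrow> real" where
  "inv_reg_norm e x = inverse (reg_norm e x)"

definition reg_normalize :: "real \<Rightarrow> 'a::real_inner \<Rightarrow> 'a" where
  "reg_normalize e x = inv_reg_norm e x *\<^sub>R x"

definition reg_normalize_deriv :: "real \<Rightarrow> 'a::real_inner \<Rightarrow> 'a \<Rightarrow> 'a" where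
  "reg_normalize_deriv e x h =
     inv_reg_norm e x *\<^sub>R h - (inv_reg_norm e x * (reg_normalize e x \<bullet> h)) *\<^sub>R reg_normalize e x"

context
  fixes e :: real
  assumes e: "e > 0"
begin

lemma reg_norm_eq_norm_Pair: "reg_norm e x = norm (x, sqrt e)"
  using e by (simp add: reg_norm_def norm_Pair power2_norm_eq_inner)

lemma reg_norm_pos: "reg_norm e x > 0"
  unfolding reg_norm_def using e by (simp add: add_nonneg_pos)

lemma sqrt_le_reg_norm: "sqrt e \<le> reg_norm e x"
  unfolding reg_norm_def using e by simp

lemma norm_le_reg_norm: "norm x \<le> reg_norm e x"
  unfolding reg_norm_def using e by (simp add: real_le_rsqrt power2_norm_eq_inner[symmetric])

lemma abs_reg_norm_diff_le: "\<bar>reg_norm e x - reg_norm e y\<bar> \<le> norm (x - y)"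
  using norm_triangle_ineq3[of "(x, sqrt e)" "(y, sqrt e)"] by (simp add: reg_norm_eq_norm_Pair)

lemma inv_reg_norm_pos: "inv_reg_norm e x > 0"
  unfolding inv_reg_norm_def using reg_norm_pos by simp

lemma inv_reg_norm_le: "inv_reg_norm e x \<le> 1 / sqrt e"
  unfolding inv_reg_norm_def using sqrt_le_reg_norm[of x] e
  by (simp add: inverse_eq_divide frac_le)

lemma norm_reg_normalize_le: "norm (reg_normalize e x) \<le> 1"
  unfolding reg_normalize_def inv_reg_norm_def using norm_le_reg_norm[of x] reg_norm_pos[of x]
  by (simp add: inverse_eq_divide divide_le_eq_1)

lemma abs_inv_reg_norm_diff:
  "\<bar>inv_reg_norm e x - inv_reg_norm e y\<bar> = \<bar>reg_norm e x - reg_norm e y\<bar> / (reg_norm e x * reg_norm e y)"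
  unfolding inv_reg_norm_def using reg_norm_pos[of x] reg_norm_pos[of y]
  by (simp add: field_simps abs_minus_commute)

lemma lipschitz_on_inv_reg_norm: "(1 / e)-lipschitz_on UNIV (inv_reg_norm e)"
proof (rule lipschitz_onI)
  fix x y :: 'a
  have "sqrt e * sqrt e \<le> reg_norm e x * reg_norm e y"
    using sqrt_le_reg_norm[of x] sqrt_le_reg_norm[of y] reg_norm_pos[of x] e
    by (intro mult_mono) auto
  then have e_le: "e \<le> reg_norm e x * reg_norm e y" using e by simp
  have "\<bar>inv_reg_norm e x - inv_reg_norm e y\<bar> \<le> norm (x - y) / (reg_norm e x * reg_norm e y)"
    unfolding abs_inv_reg_norm_diff using abs_reg_norm_diff_le[of x y] reg_norm_pos[of x] reg_norm_pos[of y]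
    by (simp add: divide_right_mono)
  also have "\<dots> \<le> norm (x - y) / e"
    using e_le e by (intro divide_left_mono) auto
  finally show "dist (inv_reg_norm e x) (inv_reg_norm e y) \<le> 1 / e * dist x y"
    by (simp add: dist_norm dist_real_def)
qed (use e in simp)

lemma lipschitz_on_reg_normalize: "(2 / sqrt e)-lipschitz_on UNIV (reg_normalize e)"
proof (rule lipschitz_onI)
  fix x y :: 'a
  have "reg_normalize e x - reg_normalize e y
      = inv_reg_norm e x *\<^sub>R (x - y) + (inv_reg_norm e x - inv_reg_norm e y) *\<^sub>R y"
    unfolding reg_normalize_def by (simp add: algebra_simps)
  moreover have "norm (inv_reg_norm e x *\<^sub>R (x - y)) \<le> norm (x - y) / sqrt e"
    using inv_reg_norm_le[of x] inv_reg_norm_pos[of x]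
    by (simp add: mult_right_mono divide_inverse mult.commute)
  moreover have "norm ((inv_reg_norm e x - inv_reg_norm e y) *\<^sub>R y)
      = \<bar>reg_norm e x - reg_norm e y\<bar> / reg_norm e x * (norm y / reg_norm e y)"
    using abs_inv_reg_norm_diff[of x y] by simp
  moreover have "\<dots> \<le> (norm (x - y) / sqrt e) * 1"
  proof (intro mult_mono)
    show "\<bar>reg_norm e x - reg_norm e y\<bar> / reg_norm e x \<le> norm (x - y) / sqrt e"
      using abs_reg_norm_diff_le[of x y] sqrt_le_reg_norm[of x] e by (intro frac_le) auto
    show "norm y / reg_norm e y \<le> 1"
      using norm_le_reg_norm[of y] reg_norm_pos[of y] by simp
  qed (use reg_norm_pos[of y] reg_norm_pos[of x] e in auto)
  ultimately have "norm (reg_normalize e x - reg_normalize e y) \<le> norm (x - y) / sqrt e + norm (x - y) / sqrt e"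
    by (metis mult_1_right norm_triangle_le add_mono)
  then show "dist (reg_normalize e x) (reg_normalize e y) \<le> 2 / sqrt e * dist x y"
    by (simp add: dist_norm field_simps)
qed (use e in simp)

lemma bounded_lipschitz_inv_reg_norm: "bounded_lipschitz (inv_reg_norm e :: 'a::real_inner \<Rightarrow> real)"
  unfolding bounded_lipschitz_def using inv_reg_norm_le inv_reg_norm_pos lipschitz_on_inv_reg_norm
  by (metis abs_of_pos real_norm_def)

lemma bounded_lipschitz_reg_normalize: "bounded_lipschitz (reg_normalize e :: 'a::real_inner \<Rightarrow> 'a)"
  unfolding bounded_lipschitz_def using norm_reg_normalize_le lipschitz_on_reg_normalize by blast

lemma has_derivative_inv_reg_norm:
  "(inv_reg_norm e has_derivative (\<lambda>h. - (inv_reg_norm e x ^ 2 * (reg_normalize e x \<bullet> h)))) (at x)"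
proof -
  have pos: "x \<bullet> x + e > 0" using e by (simp add: add_nonneg_pos)
  have "((\<lambda>x. x \<bullet> x + e) has_derivative (\<lambda>h. x \<bullet> h + h \<bullet> x)) (at x)"
    by (auto intro!: derivative_eq_intros)
  from Deriv.has_derivative_inverse[OF _ has_derivative_real_sqrt[OF pos this]]
  show ?thesis
    unfolding inv_reg_norm_def[abs_def] reg_norm_def
    by (rule has_derivative_eq_rhs)
      (use pos in \<open>auto simp: fun_eq_iff reg_normalize_def inv_reg_norm_def reg_norm_def
                     inner_commute power2_eq_square field_simps\<close>)
qed

lemma has_derivative_reg_normalize: "(reg_normalize e has_derivative reg_normalize_deriv e x) (at x)"
proof -
  have "((\<lambda>x. inv_reg_norm e x *\<^sub>R x) has_derivative
      (\<lambda>h. inv_reg_norm e x *\<^sub>R h + (- (inv_reg_norm e x ^ 2 * (reg_normalize e x \<bullet> h))) *\<^sub>R x)) (at x)"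
    by (rule derivative_eq_intros has_derivative_inv_reg_norm refl)+
  then show ?thesis unfolding reg_normalize_def[abs_def]
    by (rule has_derivative_eq_rhs)
      (auto simp: reg_normalize_deriv_def reg_normalize_def power2_eq_square fun_eq_iff algebra_simps)
qed

lemma reg_normalize_deriv_symmetric:
  "reg_normalize_deriv e x h \<bullet> v = h \<bullet> reg_normalize_deriv e x v"
  unfolding reg_normalize_deriv_def
  by (simp add: inner_diff_left inner_diff_right inner_commute algebra_simps)

end

definition normalized_pairing :: "real \<Rightarrow> ('n::euclidean_space \<Rightarrow> 'm::euclidean_space) \<Rightarrow>
    ('n \<Rightarrow> 'm) \<Rightarrow> ('m \<Rightarrow> 'm) \<Rightarrow> 'n \<Rightarrow> real" where
  "normalized_pairing e Pa Pb M \<theta> = reg_normalize e (Pa \<theta>) \<bullet> M (reg_normalize e (Pb \<theta>))"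

definition normalized_pairing_grad :: "real \<Rightarrow> ('n::euclidean_space \<Rightarrow> 'm::euclidean_space) \<Rightarrow>
    ('n \<Rightarrow> 'm) \<Rightarrow> ('m \<Rightarrow> 'm) \<Rightarrow> 'n \<Rightarrow> 'n" where
  "normalized_pairing_grad e Pa Pb M \<theta> =
     adjoint Pa (reg_normalize_deriv e (Pa \<theta>) (M (reg_normalize e (Pb \<theta>))))
     + adjoint Pb (reg_normalize_deriv e (Pb \<theta>) (adjoint M (reg_normalize e (Pa \<theta>))))"

context
  fixes e :: real
  assumes e: "e > 0"
begin

lemma bounded_C11_inv_reg_norm_linear:
  fixes P :: "'a::real_normed_vector \<Rightarrow> 'b::real_inner"
  assumes P: "bounded_linear P"
  shows "bounded_C11 (\<lambda>\<theta>. inv_reg_norm e (P \<theta>))"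
proof -
  define D where "D \<theta> = (- (inv_reg_norm e (P \<theta>) * inv_reg_norm e (P \<theta>))) *\<^sub>R
    (blinfun_inner_left (reg_normalize e (P \<theta>)) o\<^sub>L Blinfun P)" for \<theta>
  have "((\<lambda>\<theta>. inv_reg_norm e (P \<theta>)) has_derivative
      (\<lambda>h. - (inv_reg_norm e (P \<theta>) ^ 2 * (reg_normalize e (P \<theta>) \<bullet> P h)))) (at \<theta>)" for \<theta>
    using has_derivative_compose[OF bounded_linear_imp_has_derivative[OF P]
        has_derivative_inv_reg_norm[OF e]] by simp
  then have "((\<lambda>\<theta>. inv_reg_norm e (P \<theta>)) has_derivative blinfun_apply (D \<theta>)) (at \<theta>)" for \<theta>
    by (rule has_derivative_eq_rhs)
      (auto simp: D_def fun_eq_iff bounded_linear_Blinfun_apply[OF P] blinfun.scaleR_left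
        blinfun.minus_left power2_eq_square inner_commute)
  moreover have "bounded_lipschitz D" unfolding D_def
    by (intro bounded_lipschitz_bilinear[OF bounded_bilinear_scaleR] bounded_lipschitz_minus
        bounded_lipschitz_bilinear[OF bounded_bilinear_mult]
        bounded_lipschitz_bilinear[OF bounded_bilinear_blinfun_compose]
        bounded_lipschitz_linear[OF bounded_linear_blinfun_inner_left]
        bounded_lipschitz_compose_linear[OF P] bounded_lipschitz_inv_reg_norm[OF e]
        bounded_lipschitz_reg_normalize[OF e] bounded_lipschitz_const)
  moreover have "bounded_lipschitz (\<lambda>\<theta>. inv_reg_norm e (P \<theta>))"
    by (intro bounded_lipschitz_compose_linear[OF P] bounded_lipschitz_inv_reg_norm[OF e])
  ultimately show ?thesis unfolding bounded_C11_def by blast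
qed

lemma bounded_C11_reg_normalize_linear:
  fixes P :: "'a::real_normed_vector \<Rightarrow> 'b::real_inner"
  assumes P: "bounded_linear P"
  shows "bounded_C11 (\<lambda>\<theta>. reg_normalize e (P \<theta>))"
proof -
  define D where "D \<theta> = inv_reg_norm e (P \<theta>) *\<^sub>R Blinfun P - inv_reg_norm e (P \<theta>) *\<^sub>R
    ((blinfun_scaleR_left (reg_normalize e (P \<theta>)) o\<^sub>L blinfun_inner_left (reg_normalize e (P \<theta>)))
      o\<^sub>L Blinfun P)" for \<theta>
  have "((\<lambda>\<theta>. reg_normalize e (P \<theta>)) has_derivative (\<lambda>h. reg_normalize_deriv e (P \<theta>) (P h))) (at \<theta>)"
    for \<theta>
    using has_derivative_compose[OF bounded_linear_imp_has_derivative[OF P]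
        has_derivative_reg_normalize[OF e]] by simp
  then have "((\<lambda>\<theta>. reg_normalize e (P \<theta>)) has_derivative blinfun_apply (D \<theta>)) (at \<theta>)" for \<theta>
    by (rule has_derivative_eq_rhs)
      (auto simp: D_def fun_eq_iff bounded_linear_Blinfun_apply[OF P] blinfun.scaleR_left
        reg_normalize_deriv_def inner_commute blinfun.diff_left)
  moreover have "bounded_lipschitz D" unfolding D_def
    by (intro bounded_lipschitz_diff bounded_lipschitz_bilinear[OF bounded_bilinear_scaleR]
        bounded_lipschitz_bilinear[OF bounded_bilinear_blinfun_compose]
        bounded_lipschitz_linear[OF bounded_linear_blinfun_inner_left]
        bounded_lipschitz_linear[OF bounded_linear_blinfun_scaleR_left]
        bounded_lipschitz_compose_linear[OF P] bounded_lipschitz_inv_reg_norm[OF e]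
        bounded_lipschitz_reg_normalize[OF e] bounded_lipschitz_const)
  moreover have "bounded_lipschitz (\<lambda>\<theta>. reg_normalize e (P \<theta>))"
    by (intro bounded_lipschitz_compose_linear[OF P] bounded_lipschitz_reg_normalize[OF e])
  ultimately show ?thesis unfolding bounded_C11_def by blast
qed

lemma bounded_C11_reg_normalize_deriv_linear:
  fixes P :: "'a::real_normed_vector \<Rightarrow> 'b::real_inner"
  assumes "bounded_linear P" "bounded_C11 V"
  shows "bounded_C11 (\<lambda>\<theta>. reg_normalize_deriv e (P \<theta>) (V \<theta>))"
  unfolding reg_normalize_deriv_def
  by (intro bounded_C11_diff bounded_C11_bilinear[OF bounded_bilinear_scaleR]
      bounded_C11_bilinear[OF bounded_bilinear_mult] bounded_C11_bilinear[OF bounded_bilinear_inner]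
      bounded_C11_inv_reg_norm_linear bounded_C11_reg_normalize_linear assms)

lemma has_gradient_normalized_pairing:
  fixes Pa Pb :: "'n::euclidean_space \<Rightarrow> 'm::euclidean_space" and M :: "'m \<Rightarrow> 'm"
  assumes Pa: "linear Pa" and Pb: "linear Pb" and M: "linear M"
  shows "GDERIV (normalized_pairing e Pa Pb M) \<theta> :> normalized_pairing_grad e Pa Pb M \<theta>"
proof -
  let ?ga = "reg_normalize e (Pa \<theta>)" and ?gb = "reg_normalize e (Pb \<theta>)"
  have da: "((\<lambda>\<theta>. reg_normalize e (Pa \<theta>)) has_derivative
      (\<lambda>h. reg_normalize_deriv e (Pa \<theta>) (Pa h))) (at \<theta>)"
    using has_derivative_compose[OF linear_imp_has_derivative[OF Pa] has_derivative_reg_normalize[OF e]]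
    by simp
  have db: "((\<lambda>\<theta>. M (reg_normalize e (Pb \<theta>))) has_derivative
      (\<lambda>h. M (reg_normalize_deriv e (Pb \<theta>) (Pb h)))) (at \<theta>)"
    using linear_imp_has_derivative[OF M, THEN has_derivative_compose[OF has_derivative_compose[OF
        linear_imp_has_derivative[OF Pb] has_derivative_reg_normalize[OF e]]]]
    by (simp add: o_def)
  show ?thesis unfolding gderiv_def normalized_pairing_def[abs_def]
  proof (rule has_derivative_eq_rhs[OF has_derivative_inner[OF da db]], rule ext)
    fix h
    have a_part: "reg_normalize_deriv e (Pa \<theta>) (Pa h) \<bullet> M ?gb
        = h \<bullet> adjoint Pa (reg_normalize_deriv e (Pa \<theta>) (M ?gb))"
      by (simp add: reg_normalize_deriv_symmetric[OF e] adjoint_clauses[OF Pa])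
    have b_part: "?ga \<bullet> M (reg_normalize_deriv e (Pb \<theta>) (Pb h))
        = h \<bullet> adjoint Pb (reg_normalize_deriv e (Pb \<theta>) (adjoint M ?ga))"
      using reg_normalize_deriv_symmetric[OF e, of "Pb \<theta>" "Pb h" "adjoint M ?ga"]
      by (simp add: adjoint_clauses[OF M] adjoint_clauses[OF Pb] inner_commute)
    show "?ga \<bullet> M (reg_normalize_deriv e (Pb \<theta>) (Pb h))
        + reg_normalize_deriv e (Pa \<theta>) (Pa h) \<bullet> M ?gb = h \<bullet> normalized_pairing_grad e Pa Pb M \<theta>"
      unfolding normalized_pairing_grad_def inner_add_right a_part b_part by simp
  qed
qed

lemma bounded_C11_normalized_pairing_grad:
  fixes Pa Pb :: "'n::euclidean_space \<Rightarrow> 'm::euclidean_space" and M :: "'m \<Rightarrow> 'm"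
  assumes "linear Pa" "linear Pb" "linear M"
  shows "bounded_C11 (normalized_pairing_grad e Pa Pb M)"
proof -
  have Pa: "bounded_linear Pa" and Pb: "bounded_linear Pb" and M: "bounded_linear M"
    and Pa': "bounded_linear (adjoint Pa)" and Pb': "bounded_linear (adjoint Pb)"
    and M': "bounded_linear (adjoint M)"
    using assms linear_conv_bounded_linear adjoint_linear by auto
  show ?thesis unfolding normalized_pairing_grad_def[abs_def]
    by (intro bounded_C11_add bounded_C11_linear[OF Pa'] bounded_C11_linear[OF Pb']
        bounded_C11_reg_normalize_deriv_linear[OF Pa] bounded_C11_reg_normalize_deriv_linear[OF Pb]
        bounded_C11_linear[OF M] bounded_C11_linear[OF M']
        bounded_C11_reg_normalize_linear[OF Pa] bounded_C11_reg_normalize_linear[OF Pb])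
qed

end

section \<open>Convexity from a Lipschitz gradient\<close>

lemma monotone_gradient_imp_convex_on:
  fixes f :: "'a::euclidean_space \<Rightarrow> real"
  assumes grad: "\<And>x. GDERIV f x :> g x"
    and mono: "\<And>x y. 0 \<le> (g y - g x) \<bullet> (y - x)"
  shows "convex_on UNIV f"
proof (rule convex_onI)
  fix t :: real and x y :: 'a
  assume t: "0 < t" "t < 1"
  define w where "w = y - x"
  define h where "h s = f (x + s *\<^sub>R w)" for s
  define h' where "h' s = g (x + s *\<^sub>R w) \<bullet> w" for s
  have "(h has_real_derivative h' s) (at s)" for s
  proof -
    have "((\<lambda>s. x + s *\<^sub>R w) has_derivative (\<lambda>r. r *\<^sub>R w)) (at s)"
      by (auto intro!: derivative_eq_intros)
    from has_derivative_compose[OF this grad[unfolded gderiv_def]]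
    show ?thesis unfolding has_field_derivative_def h_def[abs_def]
      by (rule has_derivative_eq_rhs) (auto simp: fun_eq_iff h'_def inner_commute)
  qed
  moreover have "h' s1 \<le> h' s2" if "s1 < s2" for s1 s2
  proof -
    have "0 \<le> (g (x + s2 *\<^sub>R w) - g (x + s1 *\<^sub>R w)) \<bullet> ((s2 - s1) *\<^sub>R w)"
      using mono[of "x + s1 *\<^sub>R w" "x + s2 *\<^sub>R w"] by (simp add: algebra_simps)
    then have "0 \<le> (s2 - s1) * (h' s2 - h' s1)"
      by (simp add: h'_def inner_diff_left)
    with that show ?thesis by (simp add: zero_le_mult_iff)
  qed
  ultimately have "convex_on UNIV h"
    by (intro convex_on_realI[where f'=h']) (auto simp: order_le_less)
  from convex_onD[OF this, of t 0 1] t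
  show "f ((1 - t) *\<^sub>R x + t *\<^sub>R y) \<le> (1 - t) * f x + t * f y"
    by (simp add: h_def w_def algebra_simps)
qed simp

lemma lipschitz_gradient_imp_convex_on_add_sq_norm:
  fixes f :: "'a::euclidean_space \<Rightarrow> real"
  assumes grad: "\<And>x. GDERIV f x :> g x" and lip: "L-lipschitz_on UNIV g"
  shows "convex_on UNIV (\<lambda>x. f x + L / 2 * (norm x)^2)"
proof (rule monotone_gradient_imp_convex_on)
  fix x
  have "((\<lambda>x. f x + L / 2 * (x \<bullet> x)) has_derivative (\<lambda>h. h \<bullet> g x + L / 2 * (x \<bullet> h + h \<bullet> x))) (at x)"
    using grad[unfolded gderiv_def] by (auto intro!: derivative_eq_intros)
  then show "GDERIV (\<lambda>x. f x + L / 2 * (norm x)^2) x :> g x + L *\<^sub>R x"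
    unfolding gderiv_def power2_norm_eq_inner
    by (rule has_derivative_eq_rhs) (auto simp: fun_eq_iff inner_commute algebra_simps)
next
  fix x y
  have "- ((g y - g x) \<bullet> (y - x)) \<le> norm (g y - g x) * norm (y - x)"
    using Cauchy_Schwarz_ineq2[of "g y - g x" "y - x"] by linarith
  also have "\<dots> \<le> L * norm (y - x) * norm (y - x)"
    using lipschitz_on_normD[OF lip] by (simp add: mult_right_mono)
  also have "\<dots> = L * ((y - x) \<bullet> (y - x))"
    by (simp add: power2_norm_eq_inner[symmetric] power2_eq_square)
  finally show "0 \<le> (g y + L *\<^sub>R y - (g x + L *\<^sub>R x)) \<bullet> (y - x)"
    by (simp add: inner_diff_left inner_add_left algebra_simps)
qed

lemma lipschitz_gradient_imp_curvature_bounded: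
  fixes f :: "'a::euclidean_space \<Rightarrow> real"
  assumes "\<And>x. GDERIV f x :> g x" "L-lipschitz_on UNIV g"
  shows "curvature_bounded L f"
  unfolding curvature_bounded_def
  using assms lipschitz_gradient_imp_convex_on_add_sq_norm by blast

section \<open>Trigonometric families\<close>

locale trig_combination =
  fixes F0 F1 F2 :: "'a::euclidean_space \<Rightarrow> real" and G0 G1 G2 :: "'a \<Rightarrow> 'a"
  assumes has_gradient: "\<And>x. GDERIV F0 x :> G0 x" "\<And>x. GDERIV F1 x :> G1 x" "\<And>x. GDERIV F2 x :> G2 x"
    and bounded_C11_gradient: "bounded_C11 G0" "bounded_C11 G1" "bounded_C11 G2"
begin

definition \<phi> :: "real \<Rightarrow> 'a \<Rightarrow> real" where
  "\<phi> u x = - (F0 x + cos u * F1 x + sin u * F2 x)"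

definition grad_\<phi> :: "real \<Rightarrow> 'a \<Rightarrow> 'a" where
  "grad_\<phi> u x = - (G0 x + cos u *\<^sub>R G1 x + sin u *\<^sub>R G2 x)"

definition \<phi>_angle_deriv :: "'a \<Rightarrow> real \<Rightarrow> real" where
  "\<phi>_angle_deriv x u = sin u * F1 x - cos u * F2 x"

lemma has_gradient_\<phi>: "GDERIV (\<phi> u) x :> grad_\<phi> u x"
proof -
  have "((\<lambda>x. - (F0 x + cos u * F1 x + sin u * F2 x)) has_derivative
      (\<lambda>h. - (h \<bullet> G0 x + cos u * (h \<bullet> G1 x) + sin u * (h \<bullet> G2 x)))) (at x)"
    using has_gradient[unfolded gderiv_def]
    by (intro has_derivative_minus has_derivative_add has_derivative_mult_right)
  then show ?thesis unfolding gderiv_def \<phi>_def[abs_def]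
    by (rule has_derivative_eq_rhs)
      (auto simp: fun_eq_iff grad_\<phi>_def inner_add_right inner_minus_right inner_diff_right)
qed

lemma twice_diff_loc_lip_hessian_\<phi>: "twice_diff_loc_lip_hessian (\<phi> u)"
proof (rule bounded_C11_gradient_imp_twice_diff_loc_lip_hessian[OF has_gradient_\<phi>])
  show "bounded_C11 (grad_\<phi> u)"
    unfolding grad_\<phi>_def
    by (intro bounded_C11_minus bounded_C11_add bounded_C11_bilinear[OF bounded_bilinear_scaleR]
        bounded_C11_const bounded_C11_gradient)
qed

lemma curvature_bounded_\<phi>_uniform: "\<exists>L. \<forall>u. curvature_bounded L (\<phi> u)"
proof -
  obtain L0 L1 L2 where "L0-lipschitz_on UNIV G0" "L1-lipschitz_on UNIV G1" "L2-lipschitz_on UNIV G2"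
    using bounded_C11_gradient by (metis bounded_C11E bounded_lipschitzE)
  then have "(L0 + 1 * L1 + 1 * L2)-lipschitz_on UNIV (grad_\<phi> u)" for u
    unfolding grad_\<phi>_def
    by (intro lipschitz_on_minus lipschitz_on_add lipschitz_on_cmult_upper) auto
  then show ?thesis
    using has_gradient_\<phi> lipschitz_gradient_imp_curvature_bounded by blast
qed

lemma has_real_derivative_\<phi>_angle: "((\<lambda>u. \<phi> u x) has_real_derivative \<phi>_angle_deriv x u) (at u)"
  unfolding \<phi>_def[abs_def] \<phi>_angle_deriv_def
  by (auto intro!: derivative_eq_intros simp: algebra_simps)

lemma gradient_\<phi>_angle_deriv_bounded:
  "\<exists>M. \<forall>x u. \<exists>v. GDERIV (\<lambda>x. \<phi>_angle_deriv x u) x :> v \<and> norm v \<le> M"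
proof -
  obtain B1 B2 where B: "\<And>x. norm (G1 x) \<le> B1" "\<And>x. norm (G2 x) \<le> B2"
    using bounded_C11_gradient by (metis bounded_C11E bounded_lipschitzE)
  have "GDERIV (\<lambda>x. \<phi>_angle_deriv x u) x :> sin u *\<^sub>R G1 x - cos u *\<^sub>R G2 x" for x u
  proof -
    have "((\<lambda>x. sin u * F1 x - cos u * F2 x) has_derivative
        (\<lambda>h. sin u * (h \<bullet> G1 x) - cos u * (h \<bullet> G2 x))) (at x)"
      using has_gradient[unfolded gderiv_def] by (intro has_derivative_diff has_derivative_mult_right)
    then show ?thesis unfolding gderiv_def \<phi>_angle_deriv_def
      by (rule has_derivative_eq_rhs) (auto simp: fun_eq_iff inner_diff_right)
  qed
  moreover have "norm (sin u *\<^sub>R G1 x - cos u *\<^sub>R G2 x) \<le> B1 + B2" for x u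
  proof -
    have "norm (sin u *\<^sub>R G1 x - cos u *\<^sub>R G2 x) \<le> \<bar>sin u\<bar> * norm (G1 x) + \<bar>cos u\<bar> * norm (G2 x)"
      using norm_triangle_ineq4[of "sin u *\<^sub>R G1 x" "cos u *\<^sub>R G2 x"] by simp
    also have "\<dots> \<le> 1 * B1 + 1 * B2"
      using B abs_sin_le_one abs_cos_le_one by (intro add_mono mult_mono) auto
    finally show ?thesis by simp
  qed
  ultimately show ?thesis by blast
qed

end

(* transpose (Rx u) = Rx_const + cos u *\<^sub>R Rx_cos + sin u *\<^sub>R Rx_sin *)
definition Rx_const :: "real^3^3" where
  "Rx_const = vector [vector [1, 0, 0], vector [0, 0, 0], vector [0, 0, 0]]"

definition Rx_cos :: "real^3^3" where
  "Rx_cos = vector [vector [0, 0, 0], vector [0, 1, 0], vector [0, 0, 1]]"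

definition Rx_sin :: "real^3^3" where
  "Rx_sin = vector [vector [0, 0, 0], vector [0, 0, 1], vector [0, -1, 0]]"

lemma trace_transpose_mult_transpose_Rx:
  "trace (transpose A ** B ** transpose (Rx u)) =
     A \<bullet> (B ** Rx_const) + cos u * (A \<bullet> (B ** Rx_cos)) + sin u * (A \<bullet> (B ** Rx_sin))"
  by (simp add: trace_def matrix_matrix_mult_def transpose_def inner_vec_def sum_3 Rx_def
      Rx_const_def Rx_cos_def Rx_sin_def algebra_simps sum.distrib sum_subtractf sum_distrib_left
      sum_negf)

lemma frob_norm_eq_sqrt_inner: "frob_norm A = sqrt (A \<bullet> A)"
  by (simp add: frob_norm_def inner_vec_def power2_eq_square)

lemma linear_matrix_mult_right: "linear (\<lambda>Y::real^'m^'n. Y ** C)"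
  by (rule linearI)
    (auto simp: vec_eq_iff matrix_matrix_mult_def sum.distrib algebra_simps sum_distrib_left)

lemma bfun_eq_normalized_pairing:
  "bfun Pa Pb e \<theta> u =
     - (normalized_pairing e Pa Pb (\<lambda>Y. Y ** Rx_const) \<theta>
        + cos u * normalized_pairing e Pa Pb (\<lambda>Y. Y ** Rx_cos) \<theta>
        + sin u * normalized_pairing e Pa Pb (\<lambda>Y. Y ** Rx_sin) \<theta>)"
  unfolding bfun_def normalized_pairing_def reg_normalize_def inv_reg_norm_def reg_norm_def
    trace_transpose_mult_transpose_Rx frob_norm_eq_sqrt_inner
  by (simp add: scalar_matrix_assoc[symmetric] divide_inverse algebra_simps)

theorem corollary11:
  fixes X :: "real set" and eps :: real
    and Pa Pb :: "real^'n \<Rightarrow> real^3^3"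
  assumes "X \<noteq> {}" and "compact X" and "convex X"
    and "eps > 0"
    and "linear Pa" and "linear Pb"
  shows "(\<forall>u\<in>X. twice_diff_loc_lip_hessian (\<lambda>\<theta>. bfun Pa Pb eps \<theta> u))
       \<and> (\<exists>L. \<forall>u\<in>X. curvature_bounded L (\<lambda>\<theta>. bfun Pa Pb eps \<theta> u))
       \<and> (\<exists>Du. (\<forall>\<theta> u. ((\<lambda>u'. bfun Pa Pb eps \<theta> u') has_real_derivative Du \<theta> u) (at u))
              \<and> (\<exists>M. \<forall>\<theta>. \<forall>u\<in>X. \<exists>v. GDERIV (\<lambda>\<theta>'. Du \<theta>' u) \<theta> :> v \<and> norm v \<le> M))"
proof -
  define F where "F C = normalized_pairing eps Pa Pb (\<lambda>Y. Y ** C)" for C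
  define G where "G C = normalized_pairing_grad eps Pa Pb (\<lambda>Y. Y ** C)" for C
  interpret trig_combination "F Rx_const" "F Rx_cos" "F Rx_sin" "G Rx_const" "G Rx_cos" "G Rx_sin"
    unfolding F_def G_def
    by unfold_locales (intro has_gradient_normalized_pairing bounded_C11_normalized_pairing_grad
        assms linear_matrix_mult_right)+
  have "bfun Pa Pb eps \<theta> u = \<phi> u \<theta>" for \<theta> u
    unfolding \<phi>_def by (simp add: F_def bfun_eq_normalized_pairing)
  then show ?thesis
    using twice_diff_loc_lip_hessian_\<phi> curvature_bounded_\<phi>_uniform has_real_derivative_\<phi>_angle
      gradient_\<phi>_angle_deriv_bounded
    by (simp only:) blast
qed

end
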